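(* Let $\mathcal H$ and $\mathcal K$ be Hilbert spaces. If $D$ is an nc-domain and $f$ is an $\mathcal L(\mathcal H,\mathcal K)$-valued nc-function on $D$, then there exists a unique $\mathcal L(\mathcal H,\mathcal K)$-valued nc-function $f^\sim$ on the envelope $D^\sim$ such that $f^\sim|_D=f$.
   Context: $\mathcal M^d=\bigcup_n\mathcal M_n^d$. An nc-set is a subset of $\mathcal M^d$ closed under direct sums and unitary conjugation; an nc-domain is an nc-set with each level $D\cap\mathcal M_n^d$ open. A set $A$ is invariant if $S^{-1}(A\cap\mathcal M_n^d)S\subseteq A$ for every $n$ and every invertible $S\in\mathcal M_n$. The envelope $A^\sim$ of $A$ is the smallest invariant nc-set containing $A$. An $\mathcal L(\mathcal H,\mathcal K)$-valued nc-function on a set $D$ closed under direct sums is a map $f$ with $f(x)\in\mathcal L(\mathbb C^n\otimes\mathcal H,\mathbb C^n\otimes\mathcal K)$ for $x\in D\cap\mathcal M_n^d$, $f(x\oplus y)=f(x)\oplus f(y)$, and $f(s^{-1}xs)=(s^{-1}\otimes I_{\mathcal K})f(x)(s\otimes I_{\mathcal H})$ whenever $s$ is invertible and $x,s^{-1}xs\in D$. *)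

theory Defs
  imports "HOL-Analysis.Analysis" "Jordan_Normal_Form.Schur_Decomposition"
begin

class cvec = ab_group_add +
  fixes scaleC :: "complex \<Rightarrow> 'a \<Rightarrow> 'a" (infixr \<open>*\<^sub>C\<close> 75)
  assumes scaleC_add_right: "a *\<^sub>C (x + y) = a *\<^sub>C x + a *\<^sub>C y"
    and scaleC_add_left: "(a + b) *\<^sub>C x = a *\<^sub>C x + b *\<^sub>C x"
    and scaleC_scaleC: "a *\<^sub>C (b *\<^sub>C x) = (a * b) *\<^sub>C x"
    and scaleC_one: "1 *\<^sub>C x = x"

class cinner_space = cvec +
  fixes cinner :: "'a \<Rightarrow> 'a \<Rightarrow> complex"
  assumes cinner_add_left: "cinner (x + y) z = cinner x z + cinner y z"
    and cinner_scaleC_left: "cinner (c *\<^sub>C x) y = c * cinner x y"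
    and cinner_commute: "cinner y x = cnj (cinner x y)"
    and cinner_nonneg: "0 \<le> Re (cinner x x)"
    and cinner_pos: "x \<noteq> 0 \<Longrightarrow> 0 < Re (cinner x x)"

definition cnorm :: "'a::cinner_space \<Rightarrow> real" where
  "cnorm x = sqrt (Re (cinner x x))"

class chilbert = cinner_space +
  assumes chilbert_complete:
    "\<And>X::nat \<Rightarrow> 'a. (\<forall>e>0. \<exists>N::nat. \<forall>m\<ge>N. \<forall>n\<ge>N. sqrt (Re (cinner (X m - X n) (X m - X n))) < e) \<Longrightarrow>
     (\<exists>L. \<forall>e>0. \<exists>N::nat. \<forall>n\<ge>N. sqrt (Re (cinner (X n - L) (X n - L))) < e)"

definition bdd_op :: "('h::chilbert \<Rightarrow> 'k::chilbert) \<Rightarrow> bool" where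
  "bdd_op T \<longleftrightarrow> (\<forall>x y. T (x + y) = T x + T y) \<and> (\<forall>c x. T (c *\<^sub>C x) = c *\<^sub>C T x)
     \<and> (\<exists>M. \<forall>x. cnorm (T x) \<le> M * cnorm x)"

text \<open>A point of \<open>M_n^d\<close> is represented as the pair \<open>(n, [x_1,...,x_d])\<close> with each
  \<open>x_k\<close> an \<open>n \<times> n\<close> complex matrix; \<open>n \<ge> 1\<close>.\<close>
type_synonym ncpt = "nat \<times> complex mat list"

definition ncpts :: "nat \<Rightarrow> ncpt set" where
  "ncpts d = {(n, xs). n \<ge> 1 \<and> length xs = d \<and> (\<forall>A\<in>set xs. A \<in> carrier_mat n n)}"

definition level :: "ncpt set \<Rightarrow> nat \<Rightarrow> ncpt set" where
  "level A n = {x \<in> A. fst x = n}"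

definition diag_sum :: "'a::zero mat \<Rightarrow> 'a mat \<Rightarrow> 'a mat" where
  "diag_sum A B = four_block_mat A (0\<^sub>m (dim_row A) (dim_col B)) (0\<^sub>m (dim_row B) (dim_col A)) B"

definition pt_sum :: "ncpt \<Rightarrow> ncpt \<Rightarrow> ncpt" where
  "pt_sum x y = (fst x + fst y, map2 diag_sum (snd x) (snd y))"

definition pt_conj :: "complex mat \<Rightarrow> ncpt \<Rightarrow> complex mat \<Rightarrow> ncpt" where
  "pt_conj T x S = (fst x, map (\<lambda>A. T * A * S) (snd x))"

definition unitary :: "nat \<Rightarrow> complex mat \<Rightarrow> bool" where
  "unitary n U \<longleftrightarrow> U \<in> carrier_mat n n \<and> mat_adjoint U * U = 1\<^sub>m n"

definition inverse_pair :: "nat \<Rightarrow> complex mat \<Rightarrow> complex mat \<Rightarrow> bool" where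
  "inverse_pair n S Si \<longleftrightarrow> S \<in> carrier_mat n n \<and> Si \<in> carrier_mat n n
     \<and> S * Si = 1\<^sub>m n \<and> Si * S = 1\<^sub>m n"

definition nc_set :: "nat \<Rightarrow> ncpt set \<Rightarrow> bool" where
  "nc_set d A \<longleftrightarrow> A \<subseteq> ncpts d
     \<and> (\<forall>x\<in>A. \<forall>y\<in>A. pt_sum x y \<in> A)
     \<and> (\<forall>x\<in>A. \<forall>U. unitary (fst x) U \<longrightarrow> pt_conj (mat_adjoint U) x U \<in> A)"

text \<open>Each level \<open>D \<inter> M_n^d\<close> is open in \<open>M_n^d \<cong> \<complex>^(d n\<^sup>2)\<close> (entrywise max-norm topology).\<close>
definition nc_domain :: "nat \<Rightarrow> ncpt set \<Rightarrow> bool" where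
  "nc_domain d D \<longleftrightarrow> nc_set d D \<and>
     (\<forall>x\<in>D. \<exists>e>0. \<forall>y\<in>ncpts d. fst y = fst x \<and>
        (\<forall>k<d. \<forall>i<fst x. \<forall>j<fst x. cmod (snd y ! k $$ (i,j) - snd x ! k $$ (i,j)) < e)
        \<longrightarrow> y \<in> D)"

definition invariant :: "ncpt set \<Rightarrow> bool" where
  "invariant A \<longleftrightarrow> (\<forall>x\<in>A. \<forall>S Si. inverse_pair (fst x) S Si \<longrightarrow> pt_conj Si x S \<in> A)"

definition envelope :: "nat \<Rightarrow> ncpt set \<Rightarrow> ncpt set" where
  "envelope d A = \<Inter>{B. nc_set d B \<and> invariant B \<and> A \<subseteq> B}"

text \<open>A value \<open>f(x) \<in> L(\<complex>^n \<otimes> H, \<complex>^n \<otimes> K)\<close> is represented as its \<open>n \<times> n\<close> block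
  operator matrix with entries in \<open>L(H,K)\<close>.\<close>
definition op_val :: "nat \<Rightarrow> ('h::chilbert \<Rightarrow> 'k::chilbert) mat \<Rightarrow> bool" where
  "op_val n F \<longleftrightarrow> F \<in> carrier_mat n n \<and> (\<forall>i<n. \<forall>j<n. bdd_op (F $$ (i,j)))"

definition op_sum :: "('h \<Rightarrow> 'k::zero) mat \<Rightarrow> ('h \<Rightarrow> 'k) mat \<Rightarrow> ('h \<Rightarrow> 'k) mat" where
  "op_sum F G = mat (dim_row F + dim_row G) (dim_col F + dim_col G) (\<lambda>(i,j).
     if i < dim_row F \<and> j < dim_col F then F $$ (i,j)
     else if dim_row F \<le> i \<and> dim_col F \<le> j then G $$ (i - dim_row F, j - dim_col F)
     else (\<lambda>_. 0))"

text \<open>\<open>op_conj T F S = (T \<otimes> I_K) F (S \<otimes> I_H)\<close> for \<open>n\<times>n\<close> scalar matrices \<open>T, S\<close>.\<close>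
definition op_conj :: "complex mat \<Rightarrow> ('h \<Rightarrow> 'k::cvec) mat \<Rightarrow> complex mat \<Rightarrow> ('h \<Rightarrow> 'k) mat" where
  "op_conj T F S = mat (dim_row T) (dim_col S) (\<lambda>(i,j). \<lambda>h.
     \<Sum>k<dim_col T. \<Sum>l<dim_row S. (T $$ (i,k) * S $$ (l,j)) *\<^sub>C (F $$ (k,l)) h)"

definition nc_function :: "nat \<Rightarrow> ncpt set \<Rightarrow> (ncpt \<Rightarrow> ('h::chilbert \<Rightarrow> 'k::chilbert) mat) \<Rightarrow> bool" where
  "nc_function d D f \<longleftrightarrow>
     (\<forall>x\<in>D. op_val (fst x) (f x))
     \<and> (\<forall>x\<in>D. \<forall>y\<in>D. pt_sum x y \<in> D \<longrightarrow> f (pt_sum x y) = op_sum (f x) (f y))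
     \<and> (\<forall>x\<in>D. \<forall>S Si. inverse_pair (fst x) S Si \<and> pt_conj Si x S \<in> D \<longrightarrow>
           f (pt_conj Si x S) = op_conj Si (f x) S)"

end

theory Submission
  imports Defs
begin

text \<open>The envelope of an nc-set \<open>D\<close> is the union of the similarity orbits \<open>S\<^sup>-\<^sup>1 x S\<close> of its
  points: this union contains \<open>D\<close>, is invariant, and is again an nc-set because the direct sum of two
  similarities is a similarity of the direct sum. An extension of \<open>f\<close> is therefore forced to be
  \<open>f\<^sup>\<sim>(S\<^sup>-\<^sup>1 x S) = S\<^sup>-\<^sup>1 f(x) S\<close>, which is well defined: if \<open>S\<^sup>-\<^sup>1 x S = T\<^sup>-\<^sup>1 x' T\<close> then
  \<open>x' = (S T\<^sup>-\<^sup>1)\<^sup>-\<^sup>1 x (S T\<^sup>-\<^sup>1)\<close> with both points in \<open>D\<close>, so \<open>f\<close> itself intertwines them.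
  Compatibility with similarities then follows from composing similarities, and compatibility with
  direct sums from that of \<open>f\<close>.\<close>

section \<open>Complex inner product spaces and bounded operators\<close>

lemma scaleC_zero_right [simp]: "a *\<^sub>C (0::'a::cvec) = 0"
proof -
  have "a *\<^sub>C (0::'a) = a *\<^sub>C 0 + a *\<^sub>C 0" using scaleC_add_right[of a "0::'a" 0] by simp
  thus ?thesis by simp
qed

lemma scaleC_zero_left [simp]: "0 *\<^sub>C (x::'a::cvec) = 0"
proof -
  have "0 *\<^sub>C x = 0 *\<^sub>C x + 0 *\<^sub>C x" using scaleC_add_left[of 0 0 x] by simp
  thus ?thesis by simp
qed

lemma scaleC_sum_right: "a *\<^sub>C sum f A = (\<Sum>i\<in>A. a *\<^sub>C (f i :: 'a::cvec))"
  by (induction A rule: infinite_finite_induct) (auto simp: scaleC_add_right)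

lemma scaleC_sum_left: "sum g A *\<^sub>C (x::'a::cvec) = (\<Sum>i\<in>A. g i *\<^sub>C x)"
  by (induction A rule: infinite_finite_induct) (auto simp: scaleC_add_left)

lemma cinner_add_right: "cinner (x::'a::cinner_space) (y + z) = cinner x y + cinner x z"
  by (metis cinner_add_left cinner_commute complex_cnj_add)

lemma cinner_scaleC_right: "cinner (x::'a::cinner_space) (c *\<^sub>C y) = cnj c * cinner x y"
  by (metis cinner_commute cinner_scaleC_left complex_cnj_cnj complex_cnj_mult)

lemma cinner_minus_left: "cinner (- x::'a::cinner_space) y = - cinner x y"
  by (metis add.right_inverse add_eq_0_iff cinner_add_left cinner_scaleC_left mult_zero_left
      scaleC_zero_left)

lemma cinner_minus_right: "cinner (x::'a::cinner_space) (- y) = - cinner x y"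
  by (metis cinner_commute cinner_minus_left complex_cnj_minus)

lemma cinner_zero_left [simp]: "cinner (0::'a::cinner_space) y = 0"
  using cinner_scaleC_left[of 0 "0::'a" y] by simp

lemma cinner_zero_right [simp]: "cinner (x::'a::cinner_space) 0 = 0"
  using cinner_scaleC_right[of x 0 "0::'a"] by simp

lemma Re_cinner_commute: "Re (cinner (y::'a::cinner_space) x) = Re (cinner x y)"
  by (subst cinner_commute) simp

lemma Re_cinner_diff_scaleC_self:
  fixes x y :: "'a::cinner_space"
  shows "Re (cinner (x - of_real s *\<^sub>C y) (x - of_real s *\<^sub>C y))
           = Re (cinner x x) - 2 * s * Re (cinner x y) + s\<^sup>2 * Re (cinner y y)"
proof -
  define v where "v = of_real s *\<^sub>C y"
  have "cinner (x - v) (x - v) = cinner x x - cinner x v - (cinner v x - cinner v v)"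
    by (simp only: diff_conv_add_uminus cinner_add_left cinner_add_right cinner_minus_left
        cinner_minus_right) (simp add: algebra_simps)
  thus ?thesis
    using Re_cinner_commute[of y x]
    by (simp add: v_def cinner_scaleC_left cinner_scaleC_right power2_eq_square)
qed

lemma Re_cinner_le_cnorm_mult: "Re (cinner (x::'a::cinner_space) y) \<le> cnorm x * cnorm y"
proof (cases "y = 0")
  case True thus ?thesis by (simp add: cnorm_def)
next
  case False
  define a b r where "a = Re (cinner x x)" and "b = Re (cinner y y)" and "r = Re (cinner x y)"
  have b: "b > 0" using cinner_pos[OF False] b_def by simp
  \<comment> \<open>Cauchy--Schwarz from the positivity of \<open>\<langle>x - t y, x - t y\<rangle>\<close> at \<open>t = r / b\<close>\<close>
  have "0 \<le> a - 2 * (r/b) * r + (r/b)\<^sup>2 * b"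
    using Re_cinner_diff_scaleC_self[of x "r/b" y] cinner_nonneg[of "x - of_real (r/b) *\<^sub>C y"]
    unfolding a_def b_def r_def by simp
  hence "r\<^sup>2 \<le> a * b" using b by (simp add: power2_eq_square field_simps)
  hence "r \<le> sqrt (a * b)" by (metis real_le_rsqrt)
  thus ?thesis unfolding cnorm_def a_def b_def r_def by (simp add: real_sqrt_mult)
qed

lemma cnorm_nonneg: "cnorm x \<ge> 0"
  by (simp add: cnorm_def cinner_nonneg)

lemma cnorm_triangle: "cnorm ((x::'a::cinner_space) + y) \<le> cnorm x + cnorm y"
proof -
  have "(cnorm (x + y))\<^sup>2 = Re (cinner x x) + 2 * Re (cinner x y) + Re (cinner y y)"
    using cinner_nonneg[of "x + y"]
    by (simp add: cnorm_def cinner_add_left cinner_add_right Re_cinner_commute[of y x])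
  also have "\<dots> \<le> (cnorm x)\<^sup>2 + 2 * (cnorm x * cnorm y) + (cnorm y)\<^sup>2"
    using Re_cinner_le_cnorm_mult[of x y] cinner_nonneg[of x] cinner_nonneg[of y]
    by (simp add: cnorm_def)
  also have "\<dots> = (cnorm x + cnorm y)\<^sup>2" by (simp add: power2_eq_square algebra_simps)
  finally show ?thesis
    using cnorm_nonneg[of x] cnorm_nonneg[of y] by (meson power2_le_imp_le add_nonneg_nonneg)
qed

lemma cnorm_scaleC: "cnorm (c *\<^sub>C (x::'a::cinner_space)) = cmod c * cnorm x"
proof -
  have "cinner (c *\<^sub>C x) (c *\<^sub>C x) = (c * cnj c) * cinner x x"
    by (simp add: cinner_scaleC_left cinner_scaleC_right)
  also have "c * cnj c = of_real ((cmod c)\<^sup>2)" by (rule complex_norm_square[symmetric])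
  finally show ?thesis by (simp add: cnorm_def real_sqrt_mult)
qed

lemma bdd_op_zero: "bdd_op (\<lambda>h. 0::'k::chilbert)"
  unfolding bdd_op_def by (auto intro: exI[of _ 0] simp: cnorm_def)

lemma bdd_op_add:
  assumes "bdd_op F" and "bdd_op G"
  shows "bdd_op (\<lambda>h. F h + G h)"
proof -
  from assms obtain M N where M: "\<And>x. cnorm (F x) \<le> M * cnorm x" and N: "\<And>x. cnorm (G x) \<le> N * cnorm x"
    unfolding bdd_op_def by blast
  have "cnorm (F x + G x) \<le> (M + N) * cnorm x" for x
    using cnorm_triangle[of "F x" "G x"] M[of x] N[of x] by (simp add: algebra_simps)
  thus ?thesis
    using assms unfolding bdd_op_def by (auto simp: algebra_simps scaleC_add_right intro!: exI[of _ "M + N"])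
qed

lemma bdd_op_scaleC:
  assumes "bdd_op F"
  shows "bdd_op (\<lambda>h. c *\<^sub>C F h)"
proof -
  from assms obtain M where M: "\<And>x. cnorm (F x) \<le> M * cnorm x"
    unfolding bdd_op_def by blast
  have "cnorm (c *\<^sub>C F x) \<le> (cmod c * M) * cnorm x" for x
    using M[of x] by (simp add: cnorm_scaleC mult.assoc mult_left_mono)
  thus ?thesis
    using assms unfolding bdd_op_def
    by (auto simp: scaleC_add_right scaleC_scaleC mult.commute intro!: exI[of _ "cmod c * M"])
qed

lemma bdd_op_sum:
  assumes "\<And>i. i \<in> A \<Longrightarrow> bdd_op (G i)"
  shows "bdd_op (\<lambda>h. \<Sum>i\<in>A. G i h)"
  using assms
proof (induction A rule: infinite_finite_induct)
  case (insert a A)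
  have "bdd_op (\<lambda>h. G a h + (\<Sum>i\<in>A. G i h))"
    by (rule bdd_op_add) (use insert in auto)
  thus ?case using insert by simp
qed (simp_all add: bdd_op_zero)

lemma inverse_pairD:
  "inverse_pair n S Si \<Longrightarrow> S \<in> carrier_mat n n \<and> Si \<in> carrier_mat n n \<and> S * Si = 1\<^sub>m n \<and> Si * S = 1\<^sub>m n"
  by (simp add: inverse_pair_def)

lemma inverse_pair_one: "inverse_pair n (1\<^sub>m n) (1\<^sub>m n)"
  by (simp add: inverse_pair_def)

lemma inverse_pair_sym: "inverse_pair n S Si \<Longrightarrow> inverse_pair n Si S"
  by (auto simp: inverse_pair_def)

lemma inverse_pair_mult:
  assumes "inverse_pair n S Si" and "inverse_pair n T Ti"
  shows "inverse_pair n (S * T) (Ti * Si)"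
proof -
  have c: "S \<in> carrier_mat n n" "Si \<in> carrier_mat n n" "T \<in> carrier_mat n n" "Ti \<in> carrier_mat n n"
    and e: "S * Si = 1\<^sub>m n" "Si * S = 1\<^sub>m n" "T * Ti = 1\<^sub>m n" "Ti * T = 1\<^sub>m n"
    using assms by (auto simp: inverse_pair_def)
  have "S * T * (Ti * Si) = S * (T * Ti) * Si" "Ti * Si * (S * T) = Ti * (Si * S) * T"
    using c by (simp_all add: assoc_mult_mat[of _ n n _ n _ n])
  thus ?thesis using c e by (simp add: inverse_pair_def)
qed

lemma unitary_inverse_pair:
  assumes "unitary n U"
  shows "inverse_pair n U (mat_adjoint U)"
proof -
  have U: "U \<in> carrier_mat n n" and e: "mat_adjoint U * U = 1\<^sub>m n"
    using assms by (auto simp: unitary_def)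
  have Ua: "mat_adjoint U \<in> carrier_mat n n"
    using U by (simp add: mat_adjoint_def mat_of_rows_def)
  have "U * mat_adjoint U = 1\<^sub>m n" by (rule mat_mult_left_right_inverse[OF Ua U e])
  thus ?thesis using U Ua e by (simp add: inverse_pair_def)
qed

lemma diag_sum_carrier:
  "A \<in> carrier_mat n1 n1 \<Longrightarrow> B \<in> carrier_mat n2 n2 \<Longrightarrow> diag_sum A B \<in> carrier_mat (n1 + n2) (n1 + n2)"
  unfolding diag_sum_def by simp

lemma diag_sum_mult:
  assumes "A \<in> carrier_mat n1 n1" "C \<in> carrier_mat n1 n1" "B \<in> carrier_mat n2 n2" "D \<in> carrier_mat n2 n2"
  shows "diag_sum A B * diag_sum C D = diag_sum (A * C) (B * D)"
  using assms unfolding diag_sum_def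
  by (simp add: mult_four_block_mat[OF _ zero_carrier_mat zero_carrier_mat _ _ zero_carrier_mat zero_carrier_mat])

lemma inverse_pair_diag_sum:
  assumes "inverse_pair n1 S1 Si1" and "inverse_pair n2 S2 Si2"
  shows "inverse_pair (n1 + n2) (diag_sum S1 S2) (diag_sum Si1 Si2)"
proof -
  have c: "S1 \<in> carrier_mat n1 n1" "Si1 \<in> carrier_mat n1 n1" "S2 \<in> carrier_mat n2 n2" "Si2 \<in> carrier_mat n2 n2"
    using assms by (auto simp: inverse_pair_def)
  have one: "diag_sum (1\<^sub>m n1) (1\<^sub>m n2) = 1\<^sub>m (n1 + n2)"
    unfolding diag_sum_def by simp
  show ?thesis
    using assms diag_sum_carrier[OF c(1,3)] diag_sum_carrier[OF c(2,4)]
      diag_sum_mult[OF c(1,2,3,4)] diag_sum_mult[OF c(2,1,4,3)]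
    by (simp add: inverse_pair_def one)
qed

lemma ncptsD:
  "x \<in> ncpts d \<Longrightarrow> fst x \<ge> 1 \<and> length (snd x) = d \<and> (\<forall>A\<in>set (snd x). A \<in> carrier_mat (fst x) (fst x))"
  by (auto simp: ncpts_def)

lemma fst_pt_conj [simp]: "fst (pt_conj T x S) = fst x"
  by (simp add: pt_conj_def)

lemma fst_pt_sum [simp]: "fst (pt_sum x y) = fst x + fst y"
  by (simp add: pt_sum_def)

lemma pt_conj_in_ncpts:
  "x \<in> ncpts d \<Longrightarrow> T \<in> carrier_mat (fst x) (fst x) \<Longrightarrow> S \<in> carrier_mat (fst x) (fst x)
    \<Longrightarrow> pt_conj T x S \<in> ncpts d"
  by (cases x) (auto simp: pt_conj_def ncpts_def)

lemma pt_conj_pt_conj: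
  assumes x: "x \<in> ncpts d"
    and "A \<in> carrier_mat (fst x) (fst x)" "B \<in> carrier_mat (fst x) (fst x)"
    and "C \<in> carrier_mat (fst x) (fst x)" "D \<in> carrier_mat (fst x) (fst x)"
  shows "pt_conj A (pt_conj B x C) D = pt_conj (A * B) x (C * D)"
proof -
  have "A * (B * X * C) * D = A * B * X * (C * D)" if "X \<in> carrier_mat (fst x) (fst x)" for X
    using assms that by (simp add: assoc_mult_mat[of _ "fst x" "fst x" _ "fst x" _ "fst x"])
  thus ?thesis using ncptsD[OF x] by (auto simp: pt_conj_def)
qed

lemma pt_conj_one:
  assumes x: "x \<in> ncpts d"
  shows "pt_conj (1\<^sub>m (fst x)) x (1\<^sub>m (fst x)) = x"
proof -
  have "map (\<lambda>A. 1\<^sub>m (fst x) * A * 1\<^sub>m (fst x)) (snd x) = snd x"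
    using ncptsD[OF x] by (intro map_idI) auto
  thus ?thesis by (cases x) (simp add: pt_conj_def)
qed

lemma pt_conj_similar_compose:
  assumes "x \<in> ncpts d" and "inverse_pair (fst x) S Si" and "inverse_pair (fst x) T Ti"
  shows "pt_conj Ti (pt_conj Si x S) T = pt_conj (Ti * Si) x (S * T)"
    and "inverse_pair (fst x) (S * T) (Ti * Si)"
  using pt_conj_pt_conj[OF assms(1), of Ti Si S T] inverse_pair_mult[OF assms(2,3)]
    inverse_pairD[OF assms(2)] inverse_pairD[OF assms(3)]
  by simp_all

lemma pt_sum_pt_conj:
  assumes x1: "x1 \<in> ncpts d" and x2: "x2 \<in> ncpts d"
    and A1: "A1 \<in> carrier_mat (fst x1) (fst x1)" and B1: "B1 \<in> carrier_mat (fst x1) (fst x1)"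
    and A2: "A2 \<in> carrier_mat (fst x2) (fst x2)" and B2: "B2 \<in> carrier_mat (fst x2) (fst x2)"
  shows "pt_sum (pt_conj A1 x1 B1) (pt_conj A2 x2 B2)
           = pt_conj (diag_sum A1 A2) (pt_sum x1 x2) (diag_sum B1 B2)"
proof -
  have "map2 diag_sum (map (\<lambda>A. A1 * A * B1) (snd x1)) (map (\<lambda>A. A2 * A * B2) (snd x2))
     = map (\<lambda>A. diag_sum A1 A2 * A * diag_sum B1 B2) (map2 diag_sum (snd x1) (snd x2))"
  proof (rule nth_equalityI)
    fix i assume "i < length (map2 diag_sum (map (\<lambda>A. A1 * A * B1) (snd x1)) (map (\<lambda>A. A2 * A * B2) (snd x2)))"
    hence i1: "i < length (snd x1)" and i2: "i < length (snd x2)" by auto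
    have X1: "snd x1 ! i \<in> carrier_mat (fst x1) (fst x1)" using ncptsD[OF x1] i1 by (meson nth_mem)
    have X2: "snd x2 ! i \<in> carrier_mat (fst x2) (fst x2)" using ncptsD[OF x2] i2 by (meson nth_mem)
    have "diag_sum A1 A2 * diag_sum (snd x1 ! i) (snd x2 ! i) * diag_sum B1 B2
       = diag_sum (A1 * snd x1 ! i * B1) (A2 * snd x2 ! i * B2)"
      by (simp only: diag_sum_mult[OF A1 X1 A2 X2]
          diag_sum_mult[OF mult_carrier_mat[OF A1 X1] B1 mult_carrier_mat[OF A2 X2] B2])
    thus "map2 diag_sum (map (\<lambda>A. A1 * A * B1) (snd x1)) (map (\<lambda>A. A2 * A * B2) (snd x2)) ! i =
         map (\<lambda>A. diag_sum A1 A2 * A * diag_sum B1 B2) (map2 diag_sum (snd x1) (snd x2)) ! i"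
      using i1 i2 by simp
  qed simp
  thus ?thesis by (simp add: pt_sum_def pt_conj_def)
qed

lemma index_mult_mat_sum:
  "A \<in> carrier_mat n n \<Longrightarrow> B \<in> carrier_mat n n \<Longrightarrow> i < n \<Longrightarrow> j < n \<Longrightarrow>
    (A * B) $$ (i,j) = (\<Sum>k<n. A $$ (i,k) * B $$ (k,j))"
  by (auto simp: scalar_prod_def lessThan_atLeast0 intro!: sum.cong)

lemma index_op_conj:
  "i < dim_row T \<Longrightarrow> j < dim_col S \<Longrightarrow>
    (op_conj T F S $$ (i,j)) h = (\<Sum>k<dim_col T. \<Sum>l<dim_row S. (T $$ (i,k) * S $$ (l,j)) *\<^sub>C (F $$ (k,l)) h)"
  by (simp add: op_conj_def)

lemma op_conj_carrier:
  "T \<in> carrier_mat n n \<Longrightarrow> S \<in> carrier_mat n n \<Longrightarrow> op_conj T F S \<in> carrier_mat n n"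
proof -
  assume "T \<in> carrier_mat n n" and "S \<in> carrier_mat n n"
  hence "dim_row T = n" "dim_col S = n" by auto
  thus ?thesis unfolding op_conj_def by (metis mat_carrier)
qed

lemma sum_swap_outer_inner:
  "(\<Sum>k\<in>A. \<Sum>l\<in>B. \<Sum>k'\<in>C. \<Sum>l'\<in>E. f k l k' l') = (\<Sum>k'\<in>C. \<Sum>l'\<in>E. \<Sum>k\<in>A. \<Sum>l\<in>B. f k l k' l')"
proof -
  have "(\<Sum>k\<in>A. \<Sum>l\<in>B. \<Sum>k'\<in>C. \<Sum>l'\<in>E. f k l k' l') = (\<Sum>k\<in>A. \<Sum>k'\<in>C. \<Sum>l\<in>B. \<Sum>l'\<in>E. f k l k' l')"
    by (rule sum.cong[OF refl], rule sum.swap)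
  also have "\<dots> = (\<Sum>k'\<in>C. \<Sum>k\<in>A. \<Sum>l\<in>B. \<Sum>l'\<in>E. f k l k' l')"
    by (rule sum.swap)
  also have "\<dots> = (\<Sum>k'\<in>C. \<Sum>k\<in>A. \<Sum>l'\<in>E. \<Sum>l\<in>B. f k l k' l')"
    by (intro sum.cong[OF refl], rule sum.swap)
  also have "\<dots> = (\<Sum>k'\<in>C. \<Sum>l'\<in>E. \<Sum>k\<in>A. \<Sum>l\<in>B. f k l k' l')"
    by (rule sum.cong[OF refl], rule sum.swap)
  finally show ?thesis .
qed

lemma op_conj_op_conj:
  assumes A: "A \<in> carrier_mat n n" and B: "B \<in> carrier_mat n n"
    and C: "C \<in> carrier_mat n n" and D: "D \<in> carrier_mat n n"
  shows "op_conj A (op_conj B F C) D = op_conj (A * B) F (C * D)"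
proof (rule eq_matI, rule ext)
  fix i j h assume "i < dim_row (op_conj (A * B) F (C * D))" "j < dim_col (op_conj (A * B) F (C * D))"
  hence i: "i < n" and j: "j < n" using A D by (auto simp: op_conj_def)
  have "(op_conj A (op_conj B F C) D $$ (i, j)) h =
    (\<Sum>k<n. \<Sum>l<n. (A $$ (i,k) * D $$ (l,j)) *\<^sub>C (\<Sum>k'<n. \<Sum>l'<n. (B $$ (k,k') * C $$ (l',l)) *\<^sub>C (F $$ (k',l')) h))"
    using A B C D i j by (simp add: index_op_conj op_conj_def)
  also have "\<dots> = (\<Sum>k<n. \<Sum>l<n. \<Sum>k'<n. \<Sum>l'<n. ((A $$ (i,k) * D $$ (l,j)) * (B $$ (k,k') * C $$ (l',l))) *\<^sub>C (F $$ (k',l')) h)"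
    by (simp add: scaleC_sum_right scaleC_scaleC)
  also have "\<dots> = (\<Sum>k'<n. \<Sum>l'<n. \<Sum>k<n. \<Sum>l<n. ((A $$ (i,k) * D $$ (l,j)) * (B $$ (k,k') * C $$ (l',l))) *\<^sub>C (F $$ (k',l')) h)"
    by (rule sum_swap_outer_inner)
  also have "\<dots> = (\<Sum>k'<n. \<Sum>l'<n. ((A * B) $$ (i,k') * (C * D) $$ (l',j)) *\<^sub>C (F $$ (k',l')) h)"
  proof (intro sum.cong refl)
    fix k' l' assume "k' \<in> {..<n}" "l' \<in> {..<n}"
    hence "(A * B) $$ (i,k') * (C * D) $$ (l',j) = (\<Sum>k<n. A $$ (i,k) * B $$ (k,k')) * (\<Sum>l<n. C $$ (l',l) * D $$ (l,j))"
      using i j by (simp add: index_mult_mat_sum[OF A B] index_mult_mat_sum[OF C D])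
    also have "\<dots> = (\<Sum>k<n. \<Sum>l<n. (A $$ (i,k) * D $$ (l,j)) * (B $$ (k,k') * C $$ (l',l)))"
      by (simp add: sum_product algebra_simps)
    finally show "(\<Sum>k<n. \<Sum>l<n. ((A $$ (i,k) * D $$ (l,j)) * (B $$ (k,k') * C $$ (l',l))) *\<^sub>C (F $$ (k',l')) h)
         = ((A * B) $$ (i,k') * (C * D) $$ (l',j)) *\<^sub>C (F $$ (k',l')) h"
      by (simp add: scaleC_sum_left)
  qed
  also have "\<dots> = (op_conj (A * B) F (C * D) $$ (i, j)) h"
    using A B C D i j by (simp add: index_op_conj)
  finally show "(op_conj A (op_conj B F C) D $$ (i, j)) h = (op_conj (A * B) F (C * D) $$ (i, j)) h" .
qed (use A C D in \<open>simp_all add: op_conj_def\<close>)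

definition diag_blocks :: "nat \<Rightarrow> (nat \<Rightarrow> nat \<Rightarrow> 'a::zero) \<Rightarrow> (nat \<Rightarrow> nat \<Rightarrow> 'a) \<Rightarrow> nat \<Rightarrow> nat \<Rightarrow> 'a" where
  "diag_blocks n1 P Q i k =
     (if i < n1 \<and> k < n1 then P i k else if n1 \<le> i \<and> n1 \<le> k then Q (i - n1) (k - n1) else 0)"

lemma index_diag_sum_diag_blocks:
  "A \<in> carrier_mat n1 n1 \<Longrightarrow> B \<in> carrier_mat n2 n2 \<Longrightarrow> i < n1 + n2 \<Longrightarrow> k < n1 + n2 \<Longrightarrow>
    diag_sum A B $$ (i,k) = diag_blocks n1 (\<lambda>i k. A $$ (i,k)) (\<lambda>i k. B $$ (i,k)) i k"
  by (auto simp: diag_sum_def diag_blocks_def)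

lemma index_op_sum_diag_blocks:
  "F \<in> carrier_mat n1 n1 \<Longrightarrow> G \<in> carrier_mat n2 n2 \<Longrightarrow> i < n1 + n2 \<Longrightarrow> k < n1 + n2 \<Longrightarrow>
    (op_sum F G $$ (i,k)) h = diag_blocks n1 (\<lambda>i k. (F $$ (i,k)) h) (\<lambda>i k. (G $$ (i,k)) h) i k"
  by (auto simp: op_sum_def diag_blocks_def)

lemma sum_lessThan_add: "(\<Sum>k<(n1::nat) + n2. g k) = (\<Sum>k<n1. g k) + (\<Sum>k<n2. g (n1 + k))"
  by (induction n2) (simp_all add: add.assoc)

lemma sum_diag_blocks:
  fixes pa qa pb qb :: "nat \<Rightarrow> nat \<Rightarrow> complex" and pf qf :: "nat \<Rightarrow> nat \<Rightarrow> 'k::cvec"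
  shows "(\<Sum>k<n1+n2. \<Sum>l<n1+n2. (diag_blocks n1 pa qa i k * diag_blocks n1 pb qb l j) *\<^sub>C diag_blocks n1 pf qf k l)
    = diag_blocks n1 (\<lambda>i j. \<Sum>k<n1. \<Sum>l<n1. (pa i k * pb l j) *\<^sub>C pf k l)
                     (\<lambda>i j. \<Sum>k<n2. \<Sum>l<n2. (qa i k * qb l j) *\<^sub>C qf k l) i j"
proof -
  define T where "T k l = (diag_blocks n1 pa qa i k * diag_blocks n1 pb qb l j) *\<^sub>C diag_blocks n1 pf qf k l" for k l
  have "(\<Sum>k<n1+n2. \<Sum>l<n1+n2. T k l) = (\<Sum>k<n1. \<Sum>l<n1. T k l) + (\<Sum>k<n1. \<Sum>l<n2. T k (n1+l))
      + ((\<Sum>k<n2. \<Sum>l<n1. T (n1+k) l) + (\<Sum>k<n2. \<Sum>l<n2. T (n1+k) (n1+l)))"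
    by (simp add: sum_lessThan_add sum.distrib)
  also have "(\<Sum>k<n1. \<Sum>l<n2. T k (n1+l)) = 0"
    by (auto intro!: sum.neutral simp: T_def diag_blocks_def)
  also have "(\<Sum>k<n2. \<Sum>l<n1. T (n1+k) l) = 0"
    by (auto intro!: sum.neutral simp: T_def diag_blocks_def)
  also have "(\<Sum>k<n1. \<Sum>l<n1. T k l)
      = (if i < n1 \<and> j < n1 then \<Sum>k<n1. \<Sum>l<n1. (pa i k * pb l j) *\<^sub>C pf k l else 0)"
    by (auto intro!: sum.cong sum.neutral simp: T_def diag_blocks_def)
  also have "(\<Sum>k<n2. \<Sum>l<n2. T (n1+k) (n1+l))
      = (if n1 \<le> i \<and> n1 \<le> j then \<Sum>k<n2. \<Sum>l<n2. (qa (i-n1) k * qb l (j-n1)) *\<^sub>C qf k l else 0)"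
    by (auto intro!: sum.cong sum.neutral simp: T_def diag_blocks_def)
  finally show ?thesis unfolding T_def by (auto simp: diag_blocks_def)
qed

lemma op_conj_op_sum:
  assumes A1: "A1 \<in> carrier_mat n1 n1" and B1: "B1 \<in> carrier_mat n1 n1"
    and A2: "A2 \<in> carrier_mat n2 n2" and B2: "B2 \<in> carrier_mat n2 n2"
    and F1: "F1 \<in> carrier_mat n1 n1" and F2: "F2 \<in> carrier_mat n2 n2"
  shows "op_conj (diag_sum A1 A2) (op_sum F1 F2) (diag_sum B1 B2) = op_sum (op_conj A1 F1 B1) (op_conj A2 F2 B2)"
proof (rule eq_matI, rule ext)
  have DA: "diag_sum A1 A2 \<in> carrier_mat (n1+n2) (n1+n2)" and DB: "diag_sum B1 B2 \<in> carrier_mat (n1+n2) (n1+n2)"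
    using A1 A2 B1 B2 by (simp_all add: diag_sum_carrier)
  have C1: "op_conj A1 F1 B1 \<in> carrier_mat n1 n1" and C2: "op_conj A2 F2 B2 \<in> carrier_mat n2 n2"
    using A1 A2 B1 B2 by (simp_all add: op_conj_carrier)
  fix i j h
  assume "i < dim_row (op_sum (op_conj A1 F1 B1) (op_conj A2 F2 B2))"
    and "j < dim_col (op_sum (op_conj A1 F1 B1) (op_conj A2 F2 B2))"
  hence i: "i < n1 + n2" and j: "j < n1 + n2" using C1 C2 by (auto simp: op_sum_def)
  have "(op_conj (diag_sum A1 A2) (op_sum F1 F2) (diag_sum B1 B2) $$ (i, j)) h
      = (\<Sum>k<n1+n2. \<Sum>l<n1+n2. (diag_blocks n1 (\<lambda>i k. A1 $$ (i,k)) (\<lambda>i k. A2 $$ (i,k)) i k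
           * diag_blocks n1 (\<lambda>i k. B1 $$ (i,k)) (\<lambda>i k. B2 $$ (i,k)) l j)
           *\<^sub>C diag_blocks n1 (\<lambda>i k. (F1 $$ (i,k)) h) (\<lambda>i k. (F2 $$ (i,k)) h) k l)"
    using DA DB i j A1 A2 B1 B2 F1 F2
    by (auto simp: index_op_conj index_diag_sum_diag_blocks index_op_sum_diag_blocks intro!: sum.cong)
  also have "\<dots> = diag_blocks n1 (\<lambda>i j. (op_conj A1 F1 B1 $$ (i,j)) h) (\<lambda>i j. (op_conj A2 F2 B2 $$ (i,j)) h) i j"
    unfolding sum_diag_blocks using i j A1 A2 B1 B2
    by (auto simp: diag_blocks_def index_op_conj)
  also have "\<dots> = (op_sum (op_conj A1 F1 B1) (op_conj A2 F2 B2) $$ (i, j)) h"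
    by (rule index_op_sum_diag_blocks[OF C1 C2 i j, symmetric])
  finally show "(op_conj (diag_sum A1 A2) (op_sum F1 F2) (diag_sum B1 B2) $$ (i, j)) h
      = (op_sum (op_conj A1 F1 B1) (op_conj A2 F2 B2) $$ (i, j)) h" .
qed (use A1 A2 B1 B2 in \<open>simp_all add: op_conj_def op_sum_def diag_sum_def\<close>)

lemma op_val_op_conj:
  assumes F: "op_val n F" and A: "A \<in> carrier_mat n n" and B: "B \<in> carrier_mat n n"
  shows "op_val n (op_conj A F B)"
  unfolding op_val_def
proof (intro conjI allI impI)
  show "op_conj A F B \<in> carrier_mat n n" by (rule op_conj_carrier[OF A B])
  fix i j assume i: "i < n" and j: "j < n"
  have "bdd_op (\<lambda>h. \<Sum>k<n. \<Sum>l<n. (A $$ (i,k) * B $$ (l,j)) *\<^sub>C (F $$ (k,l)) h)"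
    using F unfolding op_val_def by (intro bdd_op_sum bdd_op_scaleC) auto
  moreover have "op_conj A F B $$ (i,j) = (\<lambda>h. \<Sum>k<n. \<Sum>l<n. (A $$ (i,k) * B $$ (l,j)) *\<^sub>C (F $$ (k,l)) h)"
    using A B i j by (auto simp: index_op_conj)
  ultimately show "bdd_op (op_conj A F B $$ (i, j))" by simp
qed

section \<open>The envelope as a union of similarity orbits\<close>

definition similarity_orbits :: "ncpt set \<Rightarrow> ncpt set" where
  "similarity_orbits D = {pt_conj Si x S | x S Si. x \<in> D \<and> inverse_pair (fst x) S Si}"

lemma similarity_orbitsE:
  assumes "y \<in> similarity_orbits D"
  obtains x S Si where "x \<in> D" "inverse_pair (fst x) S Si" "y = pt_conj Si x S"
  using assms unfolding similarity_orbits_def by blast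

lemma nc_set_ncpts: "nc_set d D \<Longrightarrow> x \<in> D \<Longrightarrow> x \<in> ncpts d"
  unfolding nc_set_def by blast

lemma subset_similarity_orbits:
  assumes "nc_set d D"
  shows "D \<subseteq> similarity_orbits D"
proof
  fix x assume x: "x \<in> D"
  have "x = pt_conj (1\<^sub>m (fst x)) x (1\<^sub>m (fst x))"
    using pt_conj_one[OF nc_set_ncpts[OF assms x]] by simp
  thus "x \<in> similarity_orbits D" unfolding similarity_orbits_def using x inverse_pair_one by blast
qed

lemma pt_conj_in_similarity_orbits:
  assumes D: "nc_set d D" and y: "y \<in> similarity_orbits D" and T: "inverse_pair (fst y) T Ti"
  shows "pt_conj Ti y T \<in> similarity_orbits D"
proof -
  obtain x S Si where x: "x \<in> D" and S: "inverse_pair (fst x) S Si" and y_eq: "y = pt_conj Si x S"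
    using y by (rule similarity_orbitsE)
  have T': "inverse_pair (fst x) T Ti" using T y_eq by simp
  show ?thesis
    unfolding similarity_orbits_def y_eq pt_conj_similar_compose[OF nc_set_ncpts[OF D x] S T']
    using x pt_conj_similar_compose(2)[OF nc_set_ncpts[OF D x] S T'] by blast
qed

lemma pt_sum_similarity_orbits:
  assumes D: "nc_set d D" and y1: "y1 \<in> similarity_orbits D" and y2: "y2 \<in> similarity_orbits D"
  obtains x1 S1 Si1 x2 S2 Si2 where
    "x1 \<in> D" "inverse_pair (fst x1) S1 Si1" "y1 = pt_conj Si1 x1 S1"
    "x2 \<in> D" "inverse_pair (fst x2) S2 Si2" "y2 = pt_conj Si2 x2 S2"
    "pt_sum x1 x2 \<in> D" "inverse_pair (fst (pt_sum x1 x2)) (diag_sum S1 S2) (diag_sum Si1 Si2)"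
    "pt_sum y1 y2 = pt_conj (diag_sum Si1 Si2) (pt_sum x1 x2) (diag_sum S1 S2)"
proof -
  obtain x1 S1 Si1 where x1: "x1 \<in> D" and S1: "inverse_pair (fst x1) S1 Si1" and e1: "y1 = pt_conj Si1 x1 S1"
    using y1 by (rule similarity_orbitsE)
  obtain x2 S2 Si2 where x2: "x2 \<in> D" and S2: "inverse_pair (fst x2) S2 Si2" and e2: "y2 = pt_conj Si2 x2 S2"
    using y2 by (rule similarity_orbitsE)
  have "pt_sum y1 y2 = pt_conj (diag_sum Si1 Si2) (pt_sum x1 x2) (diag_sum S1 S2)"
    unfolding e1 e2 using inverse_pairD[OF S1] inverse_pairD[OF S2]
    by (intro pt_sum_pt_conj[OF nc_set_ncpts[OF D x1] nc_set_ncpts[OF D x2]]) auto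
  moreover have "pt_sum x1 x2 \<in> D" using D x1 x2 unfolding nc_set_def by blast
  ultimately show ?thesis
    using that x1 x2 S1 S2 e1 e2 inverse_pair_diag_sum[OF S1 S2] by simp
qed

lemma nc_set_similarity_orbits:
  assumes D: "nc_set d D"
  shows "nc_set d (similarity_orbits D)"
  unfolding nc_set_def
proof (intro conjI ballI allI impI subsetI)
  fix y assume "y \<in> similarity_orbits D"
  then obtain x S Si where "x \<in> D" "inverse_pair (fst x) S Si" "y = pt_conj Si x S"
    by (rule similarity_orbitsE)
  thus "y \<in> ncpts d" using nc_set_ncpts[OF D] inverse_pairD by (simp add: pt_conj_in_ncpts)
next
  fix y1 y2 assume "y1 \<in> similarity_orbits D" "y2 \<in> similarity_orbits D"
  then show "pt_sum y1 y2 \<in> similarity_orbits D"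
    by (rule pt_sum_similarity_orbits[OF D]) (unfold similarity_orbits_def, blast)
next
  fix y U assume "y \<in> similarity_orbits D" "unitary (fst y) U"
  thus "pt_conj (mat_adjoint U) y U \<in> similarity_orbits D"
    by (intro pt_conj_in_similarity_orbits[OF D] unitary_inverse_pair)
qed

lemma envelope_eq_similarity_orbits:
  assumes D: "nc_set d D"
  shows "envelope d D = similarity_orbits D"
proof
  have "invariant (similarity_orbits D)"
    unfolding invariant_def using pt_conj_in_similarity_orbits[OF D] by blast
  thus "envelope d D \<subseteq> similarity_orbits D"
    unfolding envelope_def using nc_set_similarity_orbits[OF D] subset_similarity_orbits[OF D] by blast
  show "similarity_orbits D \<subseteq> envelope d D"
    unfolding envelope_def invariant_def similarity_orbits_def by blast
qed

section \<open>Extension of nc-functions to the envelope\<close>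

lemma nc_functionD:
  assumes "nc_function d D f"
  shows "x \<in> D \<Longrightarrow> op_val (fst x) (f x)"
    and "x \<in> D \<Longrightarrow> y \<in> D \<Longrightarrow> pt_sum x y \<in> D \<Longrightarrow> f (pt_sum x y) = op_sum (f x) (f y)"
    and "x \<in> D \<Longrightarrow> inverse_pair (fst x) S Si \<Longrightarrow> pt_conj Si x S \<in> D
           \<Longrightarrow> f (pt_conj Si x S) = op_conj Si (f x) S"
  using assms unfolding nc_function_def by blast+

lemma nc_function_op_conj_eq:
  assumes D: "nc_set d D" and f: "nc_function d D f"
    and x: "x \<in> D" and x': "x' \<in> D" and S: "inverse_pair (fst x) S Si" and T: "inverse_pair (fst x') T Ti"
    and eq: "pt_conj Si x S = pt_conj Ti x' T"
  shows "op_conj Si (f x) S = op_conj Ti (f x') T"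
proof -
  define n where "n = fst x"
  have "fst x' = n" using eq unfolding n_def by (metis fst_pt_conj)
  hence S': "inverse_pair n S Si" and T': "inverse_pair n T Ti" using S T n_def by auto
  have Sc: "S \<in> carrier_mat n n" "Si \<in> carrier_mat n n" "S * Si = 1\<^sub>m n" "Si * S = 1\<^sub>m n"
    and Tc: "T \<in> carrier_mat n n" "Ti \<in> carrier_mat n n" "T * Ti = 1\<^sub>m n" "Ti * T = 1\<^sub>m n"
    using S' T' by (auto simp: inverse_pair_def)
  have "x' = pt_conj T (pt_conj Ti x' T) Ti"
    using pt_conj_pt_conj[OF nc_set_ncpts[OF D x'], of T Ti T Ti] pt_conj_one[OF nc_set_ncpts[OF D x']]
      \<open>fst x' = n\<close> Tc by simp
  also have "\<dots> = pt_conj (T * Si) x (S * Ti)"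
    unfolding eq[symmetric] using pt_conj_pt_conj[OF nc_set_ncpts[OF D x], of T Si S Ti] n_def Tc Sc by simp
  finally have x'_eq: "x' = pt_conj (T * Si) x (S * Ti)" .
  \<comment> \<open>\<open>x'\<close> is similar to \<open>x\<close> inside \<open>D\<close>, so \<open>f\<close> itself relates \<open>f x'\<close> to \<open>f x\<close>\<close>
  have "f x' = op_conj (T * Si) (f x) (S * Ti)"
    using nc_functionD(3)[OF f x, of "S * Ti" "T * Si"] inverse_pair_mult[OF S' inverse_pair_sym[OF T']]
      x'_eq x' n_def by simp
  hence "op_conj Ti (f x') T = op_conj (Ti * (T * Si)) (f x) (S * Ti * T)"
    using op_conj_op_conj[OF Tc(2) mult_carrier_mat[OF Tc(1) Sc(2)] mult_carrier_mat[OF Sc(1) Tc(2)] Tc(1)]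
    by simp
  moreover have "Ti * (T * Si) = Si" using assoc_mult_mat[OF Tc(2,1) Sc(2)] Tc(4) Sc(2) by simp
  moreover have "S * Ti * T = S" using assoc_mult_mat[OF Sc(1) Tc(2,1)] Tc(4) Sc(1) by simp
  ultimately show ?thesis by simp
qed

definition nc_extension :: "ncpt set \<Rightarrow> (ncpt \<Rightarrow> ('h \<Rightarrow> 'k::cvec) mat) \<Rightarrow> ncpt \<Rightarrow> ('h \<Rightarrow> 'k) mat" where
  "nc_extension D f y =
     (SOME F. \<exists>x S Si. x \<in> D \<and> inverse_pair (fst x) S Si \<and> y = pt_conj Si x S \<and> F = op_conj Si (f x) S)"

lemma nc_extension_pt_conj:
  assumes D: "nc_set d D" and f: "nc_function d D f" and x: "x \<in> D" and S: "inverse_pair (fst x) S Si"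
  shows "nc_extension D f (pt_conj Si x S) = op_conj Si (f x) S"
proof -
  let ?P = "\<lambda>F. \<exists>x' T Ti. x' \<in> D \<and> inverse_pair (fst x') T Ti \<and> pt_conj Si x S = pt_conj Ti x' T
                        \<and> F = op_conj Ti (f x') T"
  have "?P (op_conj Si (f x) S)" using x S by blast
  hence "?P (nc_extension D f (pt_conj Si x S))" unfolding nc_extension_def by (rule someI)
  thus ?thesis using nc_function_op_conj_eq[OF D f x _ S] by metis
qed

lemma nc_extension_eq:
  assumes D: "nc_set d D" and f: "nc_function d D f" and x: "x \<in> D"
  shows "nc_extension D f x = f x"
proof -
  have x_eq: "pt_conj (1\<^sub>m (fst x)) x (1\<^sub>m (fst x)) = x"
    by (rule pt_conj_one[OF nc_set_ncpts[OF D x]])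
  \<comment> \<open>conjugating by the identity is the identity on values, by the nc-property of \<open>f\<close> itself\<close>
  have "nc_extension D f x = op_conj (1\<^sub>m (fst x)) (f x) (1\<^sub>m (fst x))"
    using nc_extension_pt_conj[OF D f x inverse_pair_one] x_eq by simp
  also have "\<dots> = f x" using nc_functionD(3)[OF f x inverse_pair_one] x_eq x by simp
  finally show ?thesis .
qed

lemma nc_extension_pt_sum:
  assumes D: "nc_set d D" and f: "nc_function d D f"
    and y1: "y1 \<in> similarity_orbits D" and y2: "y2 \<in> similarity_orbits D"
  shows "nc_extension D f (pt_sum y1 y2) = op_sum (nc_extension D f y1) (nc_extension D f y2)"
proof -
  obtain x1 S1 Si1 x2 S2 Si2 where
    x1: "x1 \<in> D" and S1: "inverse_pair (fst x1) S1 Si1" and e1: "y1 = pt_conj Si1 x1 S1"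
    and x2: "x2 \<in> D" and S2: "inverse_pair (fst x2) S2 Si2" and e2: "y2 = pt_conj Si2 x2 S2"
    and xs: "pt_sum x1 x2 \<in> D" and Ss: "inverse_pair (fst (pt_sum x1 x2)) (diag_sum S1 S2) (diag_sum Si1 Si2)"
    and ys: "pt_sum y1 y2 = pt_conj (diag_sum Si1 Si2) (pt_sum x1 x2) (diag_sum S1 S2)"
    using pt_sum_similarity_orbits[OF D y1 y2] by metis
  have F1: "f x1 \<in> carrier_mat (fst x1) (fst x1)" and F2: "f x2 \<in> carrier_mat (fst x2) (fst x2)"
    using nc_functionD(1)[OF f x1] nc_functionD(1)[OF f x2] unfolding op_val_def by blast+
  have "nc_extension D f (pt_sum y1 y2) = op_conj (diag_sum Si1 Si2) (op_sum (f x1) (f x2)) (diag_sum S1 S2)"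
    unfolding ys nc_extension_pt_conj[OF D f xs Ss] nc_functionD(2)[OF f x1 x2 xs] ..
  also have "\<dots> = op_sum (op_conj Si1 (f x1) S1) (op_conj Si2 (f x2) S2)"
    using inverse_pairD[OF S1] inverse_pairD[OF S2] F1 F2 by (intro op_conj_op_sum) auto
  also have "\<dots> = op_sum (nc_extension D f y1) (nc_extension D f y2)"
    unfolding e1 e2 nc_extension_pt_conj[OF D f x1 S1] nc_extension_pt_conj[OF D f x2 S2] ..
  finally show ?thesis .
qed

lemma nc_extension_pt_conj_orbit:
  assumes D: "nc_set d D" and f: "nc_function d D f"
    and y: "y \<in> similarity_orbits D" and T: "inverse_pair (fst y) T Ti"
  shows "nc_extension D f (pt_conj Ti y T) = op_conj Ti (nc_extension D f y) T"
proof -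
  obtain x S Si where x: "x \<in> D" and S: "inverse_pair (fst x) S Si" and y_eq: "y = pt_conj Si x S"
    using y by (rule similarity_orbitsE)
  have T': "inverse_pair (fst x) T Ti" using T y_eq by simp
  note compose = pt_conj_similar_compose[OF nc_set_ncpts[OF D x] S T']
  have "nc_extension D f (pt_conj Ti y T) = op_conj (Ti * Si) (f x) (S * T)"
    unfolding y_eq compose(1) nc_extension_pt_conj[OF D f x compose(2)] ..
  also have "\<dots> = op_conj Ti (op_conj Si (f x) S) T"
    using inverse_pairD[OF S] inverse_pairD[OF T'] by (simp add: op_conj_op_conj[of _ "fst x"])
  also have "\<dots> = op_conj Ti (nc_extension D f y) T"
    unfolding y_eq nc_extension_pt_conj[OF D f x S] ..
  finally show ?thesis .
qed

lemma nc_function_nc_extension: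
  assumes D: "nc_set d D" and f: "nc_function d D f"
  shows "nc_function d (similarity_orbits D) (nc_extension D f)"
  unfolding nc_function_def
proof (intro conjI ballI allI impI)
  fix y assume "y \<in> similarity_orbits D"
  then obtain x S Si where "x \<in> D" "inverse_pair (fst x) S Si" "y = pt_conj Si x S"
    by (rule similarity_orbitsE)
  thus "op_val (fst y) (nc_extension D f y)"
    using nc_extension_pt_conj[OF D f] op_val_op_conj[OF nc_functionD(1)[OF f]] inverse_pairD by simp
qed (use nc_extension_pt_sum[OF D f] nc_extension_pt_conj_orbit[OF D f] in blast)+

lemma nc_function_eq_nc_extension:
  assumes D: "nc_set d D" and f: "nc_function d D f"
    and g: "nc_function d (similarity_orbits D) g" and g_eq: "\<forall>x\<in>D. g x = f x"
    and y: "y \<in> similarity_orbits D"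
  shows "g y = nc_extension D f y"
proof -
  obtain x S Si where x: "x \<in> D" and S: "inverse_pair (fst x) S Si" and y_eq: "y = pt_conj Si x S"
    using y by (rule similarity_orbitsE)
  have "g y = op_conj Si (g x) S"
    using nc_functionD(3)[OF g _ S] subset_similarity_orbits[OF D] x y y_eq by blast
  thus ?thesis using g_eq x y_eq nc_extension_pt_conj[OF D f x S] by simp
qed

theorem proposition3p11:
  fixes d :: nat and D :: "ncpt set"
    and f :: "ncpt \<Rightarrow> ('h::chilbert \<Rightarrow> 'k::chilbert) mat"
  assumes "nc_domain d D"
    and "nc_function d D f"
  shows "\<exists>g. nc_function d (envelope d D) g \<and> (\<forall>x\<in>D. g x = f x)
           \<and> (\<forall>g'. nc_function d (envelope d D) g' \<and> (\<forall>x\<in>D. g' x = f x)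
                  \<longrightarrow> (\<forall>x\<in>envelope d D. g' x = g x))"
proof -
  have D: "nc_set d D" using assms(1) unfolding nc_domain_def by blast
  show ?thesis
    unfolding envelope_eq_similarity_orbits[OF D]
    using nc_function_nc_extension[OF D assms(2)] nc_extension_eq[OF D assms(2)]
      nc_function_eq_nc_extension[OF D assms(2)]
    by blast
qed

end
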